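(* Let $A\in\mathscr{D}\mathrm{iag}$ with $L(A)>0$. There are constants $\delta=\delta(A)>0$ and $\bar n=\bar n(A)\in\mathbb{N}$ such that if $B\in\mathrm{SL}_2(\mathbb{R})^k$ is any cocycle with $d(B,A)\le\delta$, then for all scales $n$ with $\bar n\le n\le\big(\log d(B,\mathscr{D}\mathrm{iag})^{-1}\big)^{3/4}$ we have $$L_n(B)\ge\frac{L(A)}3,\qquad |L_{2n}(B)-L_n(B)|\le2n^{-1/5},$$ $$\mathbb{P}\Big[\Big|\tfrac1n\log\|B^{(n)}\|-L_n(B)\Big|>n^{-1/5}\Big]\le e^{-n^{1/3}}.$$
   Context: $\mathrm{SL}_2(\mathbb{R})$ denotes real $2\times2$ matrices with determinant $\pm1$. $\Sigma=\{1,\dots,k\}$, $p$ a probability vector with positive entries, $X=\Sigma^{\mathbb{Z}}$, $\mathbb{P}=p^{\mathbb{Z}}$ with expectation $\mathbb{E}$; a cocycle $B=(B_1,\dots,B_k)$ has iterates $B^{(n)}(x)=B_{x_{n-1}}\cdots B_{x_0}$ and Lyapunov exponent $L(B)$; $d(A,B)=\max_j\|A_j-B_j\|$. $\mathscr{D}\mathrm{iag}$ is the set of cocycles with two transversal lines invariant under all matrices, $d(B,\mathscr{D}\mathrm{iag})=\inf_{D\in\mathscr{D}\mathrm{iag}}d(B,D)$ (if it is $0$, the upper bound on $n$ is $+\infty$). The finite scale Lyapunov exponent is $L_n(B)=\mathbb{E}[\frac1n\log\|B^{(n)}\|]$. *)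

theory Defs
  imports "HOL-Probability.Probability"
begin

type_synonym mat2 = "real^2^2"

definition mnorm :: "mat2 \<Rightarrow> real" where
  "mnorm A = onorm (\<lambda>v. A *v v)"

text \<open>SL_2(R) in the paper's sense: determinant +1 or -1.\<close>
definition SL2 :: "mat2 set" where
  "SL2 = {A. \<bar>det A\<bar> = 1}"

definition cocycle_dist :: "('s::finite \<Rightarrow> mat2) \<Rightarrow> ('s \<Rightarrow> mat2) \<Rightarrow> real" where
  "cocycle_dist A B = Max (range (\<lambda>j. mnorm (A j - B j)))"

fun iterate :: "('s \<Rightarrow> mat2) \<Rightarrow> nat \<Rightarrow> (int \<Rightarrow> 's) \<Rightarrow> mat2" where
  "iterate B 0 x = mat 1"
| "iterate B (Suc n) x = B (x (int n)) ** iterate B n x"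

definition bernoulli :: "'s pmf \<Rightarrow> (int \<Rightarrow> 's) measure" where
  "bernoulli p = PiM UNIV (\<lambda>_::int. measure_pmf p)"

definition Ln :: "'s pmf \<Rightarrow> ('s \<Rightarrow> mat2) \<Rightarrow> nat \<Rightarrow> real" where
  "Ln p B n = integral\<^sup>L (bernoulli p) (\<lambda>x. ln (mnorm (iterate B n x)) / real n)"

definition Lyap :: "'s pmf \<Rightarrow> ('s \<Rightarrow> mat2) \<Rightarrow> real" where
  "Lyap p B = lim (\<lambda>n. Ln p B n)"

definition Diag :: "('s \<Rightarrow> mat2) set" where
  "Diag = {D. (\<forall>j. D j \<in> SL2) \<and>
     (\<exists>u v :: real^2. u \<noteq> 0 \<and> v \<noteq> 0 \<and> \<not> (\<exists>c. v = c *\<^sub>R u) \<and>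
        (\<forall>j. (\<exists>a. D j *v u = a *\<^sub>R u) \<and> (\<exists>b. D j *v v = b *\<^sub>R v)))}"

definition dist_Diag :: "('s::finite \<Rightarrow> mat2) \<Rightarrow> real" where
  "dist_Diag B = Inf ((\<lambda>D. cocycle_dist B D) ` Diag)"

end

(*
  If the matrices D_j share invariant unit vectors u, v with eigenvalues a_j, b_j, then
  |a_j b_j| = 1, and ||D^(n)(x)|| equals exp |S_n(x)| up to the factor 2 / |det (u, v)|,
  where S_n is the Birkhoff sum of ln |a_j|.  Hence L_n(D) lies between L(D) = |E ln |a||
  and L(D) + O(1/n) + E |S_n/n - E ln |a||, and Hoeffding's inequality controls both the
  deviations of (1/n) ln ||D^(n)|| from L_n(D) and the difference L_2n(D) - L_n(D), with
  constants depending only on a bound for ||D_j|| and on the angle between u and v.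

  As L(A) > 0, some A_j has two distinct eigenvalues, so the invariant lines of every
  diagonal cocycle D near A make an angle bounded below, and comparing L_n(D) with L_n(A)
  at one fixed scale n gives L(D) >= L(A)/2.  A cocycle B near A lies within 2 d(B, Diag)
  of such a D, and for n <= (ln (1 / d(B, Diag)))^(3/4) the iterates of B and D differ by
  at most C^(2n) d(B, Diag), which is much smaller than n^(-1/5); so the estimates for D
  transfer to B.
*)

theory Submission
  imports Defs "HOL-Real_Asymp.Real_Asymp"
begin

section \<open>Vectors and matrices in the plane\<close>

lemma norm_vec2_sq: "(norm (x::real^2))^2 = (x$1)^2 + (x$2)^2"
  by (simp add: norm_vec_def L2_set_def sum_2)

lemma vec2_eq_iff: "(x::real^2) = y \<longleftrightarrow> x$1 = y$1 \<and> x$2 = y$2"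
  by (simp add: vec_eq_iff forall_2)

lemma mat2_mult_vec_nth:
  "((A::mat2) *v x) $ 1 = A$1$1 * x$1 + A$1$2 * x$2"
  "((A::mat2) *v x) $ 2 = A$2$1 * x$1 + A$2$2 * x$2"
  by (simp_all add: matrix_vector_mult_def sum_2)

lemma mnorm_mult_vec_le: "norm (A *v w) \<le> mnorm A * norm w"
  unfolding mnorm_def using onorm[OF matrix_vector_mul_bounded_linear] by blast

lemma mnorm_le: "(\<And>w. norm (A *v w) \<le> c * norm w) \<Longrightarrow> mnorm A \<le> c"
  unfolding mnorm_def by (rule onorm_le)

lemma mnorm_nonneg: "0 \<le> mnorm A"
  unfolding mnorm_def by (rule onorm_pos_le[OF matrix_vector_mul_bounded_linear])

lemma abs_nth_le_mnorm: "\<bar>A $ i $ j\<bar> \<le> mnorm A"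
  unfolding mnorm_def by (rule matrix_component_le_onorm)

lemma mnorm_zero [simp]: "mnorm 0 = 0"
  using mnorm_le[of 0 0] mnorm_nonneg[of 0] by simp

lemma mnorm_add_le: "mnorm (A + B) \<le> mnorm A + mnorm B"
proof (rule mnorm_le)
  fix w
  have "norm ((A + B) *v w) \<le> norm (A *v w) + norm (B *v w)"
    by (simp add: matrix_vector_mult_add_rdistrib norm_triangle_ineq)
  also have "\<dots> \<le> (mnorm A + mnorm B) * norm w"
    using mnorm_mult_vec_le[of A w] mnorm_mult_vec_le[of B w] by (simp add: algebra_simps)
  finally show "norm ((A + B) *v w) \<le> (mnorm A + mnorm B) * norm w" .
qed

lemma mnorm_mult_le: "mnorm (A ** B) \<le> mnorm A * mnorm B"
proof (rule mnorm_le)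
  fix w
  have "norm ((A ** B) *v w) \<le> mnorm A * norm (B *v w)"
    by (simp add: matrix_vector_mul_assoc[symmetric] mnorm_mult_vec_le)
  also have "\<dots> \<le> mnorm A * mnorm B * norm w"
    by (simp add: mult.assoc mult_left_mono mnorm_mult_vec_le mnorm_nonneg)
  finally show "norm ((A ** B) *v w) \<le> mnorm A * mnorm B * norm w" .
qed

lemma mnorm_minus_commute: "mnorm (A - B) = mnorm (B - A)"
proof -
  have "mnorm (A - B) \<le> mnorm (B - A)" for A B :: mat2
  proof (rule mnorm_le)
    fix w
    have "norm ((A - B) *v w) = norm ((B - A) *v w)"
      by (simp add: matrix_vector_mult_diff_rdistrib norm_minus_commute)
    then show "norm ((A - B) *v w) \<le> mnorm (B - A) * norm w"
      using mnorm_mult_vec_le by simp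
  qed
  then show ?thesis by (meson antisym)
qed

lemma mnorm_le_add_diff: "mnorm A \<le> mnorm B + mnorm (A - B)"
  using mnorm_add_le[of B "A - B"] by simp

lemma mnorm_diff_triangle: "mnorm (A - C) \<le> mnorm (A - B) + mnorm (B - C)"
  using mnorm_add_le[of "A - B" "B - C"] by simp

definition det2 :: "real^2 \<Rightarrow> real^2 \<Rightarrow> real" where
  "det2 u v = u$1 * v$2 - u$2 * v$1"

lemma det2_sq_plus_inner_sq: "(det2 u v)^2 + (u \<bullet> v)^2 = (norm u)^2 * (norm v)^2"
  unfolding norm_vec2_sq by (simp add: det2_def inner_vec_def sum_2 power2_eq_square algebra_simps)

lemma abs_det2_le: "\<bar>det2 u v\<bar> \<le> norm u * norm v"
proof -
  have "(det2 u v)^2 \<le> (norm u)^2 * (norm v)^2"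
    by (simp add: det2_sq_plus_inner_sq[symmetric])
  then have "\<bar>det2 u v\<bar>^2 \<le> (norm u * norm v)^2" by (simp add: power_mult_distrib)
  then show ?thesis by (rule power2_le_imp_le) simp
qed

lemma det2_neq_0_if_not_parallel:
  assumes "u \<noteq> 0" "\<not> (\<exists>c. v = c *\<^sub>R u)"
  shows "det2 u v \<noteq> 0"
proof
  assume d: "det2 u v = 0"
  show False
  proof (cases "u$1 = 0")
    case True
    with assms(1) have "u$2 \<noteq> 0" by (simp add: vec2_eq_iff)
    with d True have "v = (v$2 / u$2) *\<^sub>R u" by (simp add: vec2_eq_iff det2_def field_simps)
    with assms(2) show False by blast
  next
    case False
    with d have "v = (v$1 / u$1) *\<^sub>R u" by (simp add: vec2_eq_iff det2_def field_simps)
    with assms(2) show False by blast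
  qed
qed

lemma vec2_decomposition:
  assumes "det2 u v \<noteq> 0"
  shows "w = (det2 w v / det2 u v) *\<^sub>R u + (det2 u w / det2 u v) *\<^sub>R v"
proof -
  have "det2 w v * u$i + det2 u w * v$i = w$i * det2 u v" if "i = 1 \<or> i = 2" for i
    using that by (auto simp: det2_def algebra_simps)
  with assms show ?thesis by (simp add: vec2_eq_iff add_divide_distrib[symmetric] eq_divide_eq)
qed

lemma abs_det_le_mnorm_sq: "\<bar>det A\<bar> \<le> (mnorm A)^2"
proof -
  define e1 e2 where "e1 = (axis 1 1 :: real^2)" and "e2 = (axis 2 1 :: real^2)"
  have "det A = det2 (A *v e1) (A *v e2)"
    by (simp add: det_2 det2_def mat2_mult_vec_nth e1_def e2_def axis_def mult.commute)
  also have "\<bar>\<dots>\<bar> \<le> norm (A *v e1) * norm (A *v e2)" by (rule abs_det2_le)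
  also have "\<dots> \<le> mnorm A * mnorm A"
    using mnorm_mult_vec_le[of A e1] mnorm_mult_vec_le[of A e2]
    by (simp add: e1_def e2_def mult_mono mnorm_nonneg)
  finally show ?thesis by (simp add: power2_eq_square)
qed

lemma mnorm_ge_1: "\<bar>det A\<bar> = 1 \<Longrightarrow> 1 \<le> mnorm A"
  using abs_det_le_mnorm_sq[of A] mnorm_nonneg[of A] by (metis power2_le_imp_le one_power2)

lemma mnorm_mat_1 [simp]: "mnorm (mat 1) = 1"
proof (rule antisym)
  show "mnorm (mat 1) \<le> 1" by (rule mnorm_le) simp
  show "1 \<le> mnorm (mat 1)" by (rule mnorm_ge_1) simp
qed

section \<open>Matrices with two invariant lines\<close>

lemma abs_eigenvalue_le_mnorm:
  assumes "M *v u = \<alpha> *\<^sub>R u" "norm u = 1"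
  shows "\<bar>\<alpha>\<bar> \<le> mnorm M"
  using mnorm_mult_vec_le[of M u] assms by simp

lemma mnorm_le_eigenbasis:
  assumes "M *v u = \<alpha> *\<^sub>R u" "M *v v = \<beta> *\<^sub>R v" "norm u = 1" "norm v = 1" "det2 u v \<noteq> 0"
  shows "mnorm M \<le> 2 * max \<bar>\<alpha>\<bar> \<bar>\<beta>\<bar> / \<bar>det2 u v\<bar>"
proof (rule mnorm_le)
  fix w
  define s t where "s = det2 w v / det2 u v" and "t = det2 u w / det2 u v"
  have s: "\<bar>s\<bar> \<le> norm w / \<bar>det2 u v\<bar>" and t: "\<bar>t\<bar> \<le> norm w / \<bar>det2 u v\<bar>"
    using abs_det2_le[of w v] abs_det2_le[of u w] assms
    by (simp_all add: s_def t_def abs_div divide_right_mono)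
  have "M *v w = (s * \<alpha>) *\<^sub>R u + (t * \<beta>) *\<^sub>R v"
    by (subst vec2_decomposition[OF assms(5), of w])
      (simp add: s_def t_def matrix_vector_right_distrib matrix_vector_mult_scaleR assms)
  then have "norm (M *v w) \<le> \<bar>s\<bar> * \<bar>\<alpha>\<bar> + \<bar>t\<bar> * \<bar>\<beta>\<bar>"
    using norm_triangle_ineq[of "(s * \<alpha>) *\<^sub>R u" "(t * \<beta>) *\<^sub>R v"] assms by (simp add: abs_mult)
  also have "\<dots> \<le> 2 * (norm w / \<bar>det2 u v\<bar>) * max \<bar>\<alpha>\<bar> \<bar>\<beta>\<bar>"
    using mult_mono[OF s, of "\<bar>\<alpha>\<bar>" "max \<bar>\<alpha>\<bar> \<bar>\<beta>\<bar>"] mult_mono[OF t, of "\<bar>\<beta>\<bar>" "max \<bar>\<alpha>\<bar> \<bar>\<beta>\<bar>"]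
    by simp
  finally show "norm (M *v w) \<le> 2 * max \<bar>\<alpha>\<bar> \<bar>\<beta>\<bar> / \<bar>det2 u v\<bar> * norm w"
    by (simp add: field_simps)
qed

definition disc :: "mat2 \<Rightarrow> real" where
  "disc M = (M$1$1 - M$2$2)^2 + 4 * M$1$2 * M$2$1"

lemma det_disc_eigenbasis:
  assumes "M *v u = \<alpha> *\<^sub>R u" "M *v v = \<beta> *\<^sub>R v" "det2 u v \<noteq> 0"
  shows "det M = \<alpha> * \<beta>" "disc M = (\<alpha> - \<beta>)^2"
proof -
  have e: "M$1$1 * u$1 + M$1$2 * u$2 = \<alpha> * u$1" "M$2$1 * u$1 + M$2$2 * u$2 = \<alpha> * u$2"
    "M$1$1 * v$1 + M$1$2 * v$2 = \<beta> * v$1" "M$2$1 * v$1 + M$2$2 * v$2 = \<beta> * v$2"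
    using assms(1,2) by (simp_all add: vec2_eq_iff mat2_mult_vec_nth)
  have "(det M - \<alpha> * \<beta>) * det2 u v = 0"
    using e unfolding det_2 det2_def by algebra
  then show det: "det M = \<alpha> * \<beta>" using assms(3) by simp
  have "(M$1$1 + M$2$2 - (\<alpha> + \<beta>)) * det2 u v = 0"
    using e unfolding det2_def by algebra
  then have "M$1$1 + M$2$2 = \<alpha> + \<beta>" using assms(3) by simp
  moreover have "disc M = (M$1$1 + M$2$2)^2 - 4 * det M"
    by (simp add: disc_def det_2 power2_eq_square algebra_simps)
  ultimately show "disc M = (\<alpha> - \<beta>)^2" by (simp add: det power2_eq_square algebra_simps)
qed

lemma unit_vec_close_sign_multiple:
  assumes "norm u = 1" "norm v = 1"
  obtains s :: real where "\<bar>s\<bar> = 1" "(norm (v - s *\<^sub>R u))^2 \<le> 2 * (det2 u v)^2"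
proof -
  define c where "c = u \<bullet> v"
  define s :: real where "s = (if 0 \<le> c then 1 else -1)"
  have pyth: "(det2 u v)^2 + c^2 = 1"
    using det2_sq_plus_inner_sq[of u v] assms by (simp add: c_def)
  then have "\<bar>c\<bar> \<le> 1"
    by (metis abs_square_le_1 le_add_same_cancel2 zero_le_power2)
  then have "c^2 \<le> \<bar>c\<bar>"
    using mult_left_le_one_le[of "\<bar>c\<bar>" "\<bar>c\<bar>"] by (simp add: power2_eq_square)
  have "(norm (v - s *\<^sub>R u))^2 = (norm v)^2 + s^2 * (norm u)^2 - 2 * (s * c)"
    unfolding power2_norm_eq_inner c_def
    by (simp add: inner_diff_left inner_diff_right inner_commute power2_eq_square algebra_simps)
  also have "\<dots> = 2 - 2 * \<bar>c\<bar>" using assms by (simp add: s_def)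
  also have "\<dots> \<le> 2 * (det2 u v)^2" using pyth \<open>c^2 \<le> \<bar>c\<bar>\<close> by linarith
  finally show ?thesis using that[of s] by (simp add: s_def)
qed

lemma eigenvalue_gap_le:
  assumes "M *v u = \<alpha> *\<^sub>R u" "M *v v = \<beta> *\<^sub>R v" "norm u = 1" "norm v = 1"
  shows "(\<alpha> - \<beta>)^2 \<le> 8 * (mnorm M)^2 * (det2 u v)^2"
proof -
  obtain s :: real where s: "\<bar>s\<bar> = 1" "(norm (v - s *\<^sub>R u))^2 \<le> 2 * (det2 u v)^2"
    using unit_vec_close_sign_multiple[OF assms(3,4)] .
  define w where "w = v - s *\<^sub>R u"
  have "M *v w - \<alpha> *\<^sub>R w = (\<beta> - \<alpha>) *\<^sub>R v"
    by (simp add: w_def matrix_vector_mult_diff_distrib matrix_vector_mult_scaleR assms algebra_simps)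
  then have "\<bar>\<alpha> - \<beta>\<bar> = norm (M *v w - \<alpha> *\<^sub>R w)" using assms(4) by simp
  also have "\<dots> \<le> norm (M *v w) + \<bar>\<alpha>\<bar> * norm w"
    using norm_triangle_ineq4[of "M *v w" "\<alpha> *\<^sub>R w"] by simp
  also have "\<dots> \<le> 2 * mnorm M * norm w"
    using mnorm_mult_vec_le[of M w] abs_eigenvalue_le_mnorm[OF assms(1,3)]
      mult_right_mono[of "\<bar>\<alpha>\<bar>" "mnorm M" "norm w"] by simp
  finally have "(\<alpha> - \<beta>)^2 \<le> (2 * mnorm M * norm w)^2"
    by (metis power2_abs power_mono abs_ge_zero)
  also have "\<dots> = 4 * (mnorm M)^2 * (norm w)^2" by (simp add: power_mult_distrib)
  also have "\<dots> \<le> 8 * (mnorm M)^2 * (det2 u v)^2"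
    using mult_left_mono[OF s(2), of "4 * (mnorm M)^2"] by (simp add: w_def)
  finally show ?thesis .
qed

lemma abs_disc_diff_le:
  assumes close: "\<And>i k. \<bar>M$i$k - N$i$k\<bar> \<le> \<eta>" and bound: "\<And>i k. \<bar>N$i$k\<bar> \<le> c" and "\<eta> \<le> 1"
  shows "\<bar>disc M - disc N\<bar> \<le> \<eta> * (16 * c + 8)"
proof -
  define x y where "x = M$1$1 - M$2$2" and "y = N$1$1 - N$2$2"
  have "\<bar>x - y\<bar> \<le> 2 * \<eta>" "\<bar>x + y\<bar> \<le> 4 * c + 2"
    using close[of 1 1] close[of 2 2] bound[of 1 1] bound[of 2 2] \<open>\<eta> \<le> 1\<close>
    by (simp_all add: x_def y_def abs_le_iff)
  then have "\<bar>x^2 - y^2\<bar> \<le> (4 * c + 2) * (2 * \<eta>)"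
    unfolding power2_eq_square square_diff_square_factored abs_mult
    by (intro mult_mono) auto
  moreover have "\<bar>M$1$2 * M$2$1 - N$1$2 * N$2$1\<bar> \<le> \<eta> * (c + 1) + c * \<eta>"
  proof -
    have "\<bar>M$2$1\<bar> \<le> c + 1"
      using close[of 2 1] bound[of 2 1] \<open>\<eta> \<le> 1\<close> by (simp add: abs_le_iff)
    have "M$1$2 * M$2$1 - N$1$2 * N$2$1 = (M$1$2 - N$1$2) * M$2$1 + N$1$2 * (M$2$1 - N$2$1)"
      by (simp add: algebra_simps)
    then have "\<bar>M$1$2 * M$2$1 - N$1$2 * N$2$1\<bar> \<le> \<bar>M$1$2 - N$1$2\<bar> * \<bar>M$2$1\<bar> + \<bar>N$1$2\<bar> * \<bar>M$2$1 - N$2$1\<bar>"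
      by (simp add: abs_triangle_ineq[THEN order_trans] abs_mult[symmetric])
    also have "\<dots> \<le> \<eta> * (c + 1) + c * \<eta>"
      using close bound \<open>\<bar>M$2$1\<bar> \<le> c + 1\<close> abs_ge_zero order_trans
      by (intro add_mono mult_mono) blast+
    finally show ?thesis .
  qed
  moreover have "disc M - disc N = (x^2 - y^2) + 4 * (M$1$2 * M$2$1 - N$1$2 * N$2$1)"
    by (simp add: disc_def x_def y_def algebra_simps)
  ultimately show ?thesis by (simp add: abs_le_iff algebra_simps)
qed

section \<open>Iterates\<close>

lemma abs_det_iterate: "\<forall>j. B j \<in> SL2 \<Longrightarrow> \<bar>det (iterate B n x)\<bar> = 1"
  by (induction n) (auto simp: SL2_def det_mul abs_mult)

lemma mnorm_iterate_ge_1: "\<forall>j. B j \<in> SL2 \<Longrightarrow> 1 \<le> mnorm (iterate B n x)"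
  by (rule mnorm_ge_1[OF abs_det_iterate])

lemma mnorm_iterate_le:
  assumes "\<And>j. mnorm (B j) \<le> C"
  shows "mnorm (iterate B n x) \<le> C^n"
proof (induction n)
  case (Suc n)
  have "mnorm (iterate B (Suc n) x) \<le> mnorm (B (x (int n))) * mnorm (iterate B n x)"
    by (simp add: mnorm_mult_le)
  also have "\<dots> \<le> C * C^n"
    using assms Suc by (meson mult_mono mnorm_nonneg order_trans)
  finally show ?case by simp
qed simp

lemma mnorm_iterate_diff_le:
  assumes "\<And>j. mnorm (B j) \<le> C" "\<And>j. mnorm (D j) \<le> C" "\<And>j. mnorm (B j - D j) \<le> \<eta>" "1 \<le> C"
  shows "mnorm (iterate B n x - iterate D n x) \<le> n * C^n * \<eta>"
proof -
  have "0 \<le> \<eta>" using assms(3)[of undefined] mnorm_nonneg order_trans by blast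
  show ?thesis
  proof (induction n)
    case (Suc n)
    let ?b = "B (x (int n))" and ?d = "D (x (int n))" and ?X = "iterate B n x" and ?Y = "iterate D n x"
    have "iterate B (Suc n) x - iterate D (Suc n) x = ?b ** (?X - ?Y) + (?b - ?d) ** ?Y"
      by (simp add: vec_eq_iff matrix_matrix_mult_def sum_2 algebra_simps)
    then have "mnorm (iterate B (Suc n) x - iterate D (Suc n) x)
        \<le> mnorm (?b ** (?X - ?Y)) + mnorm ((?b - ?d) ** ?Y)"
      by (simp add: mnorm_add_le)
    also have "\<dots> \<le> mnorm ?b * mnorm (?X - ?Y) + mnorm (?b - ?d) * mnorm ?Y"
      by (intro add_mono mnorm_mult_le)
    also have "\<dots> \<le> C * (n * C^n * \<eta>) + \<eta> * C^n"
      using assms Suc mnorm_iterate_le[of D C n x] \<open>0 \<le> \<eta>\<close>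
      by (intro add_mono mult_mono) (auto simp: mnorm_nonneg)
    also have "\<dots> \<le> Suc n * C^(Suc n) * \<eta>"
      using assms(4) \<open>0 \<le> \<eta>\<close> mult_right_mono[of 1 C "\<eta> * C^n"] by (simp add: algebra_simps)
    finally show ?case .
  qed simp
qed

lemma iterate_eigenvector:
  assumes "\<And>j. D j *v u = a j *\<^sub>R u"
  shows "iterate D n x *v u = (\<Prod>i<n. a (x (int i))) *\<^sub>R u"
proof (induction n)
  case (Suc n)
  have "iterate D (Suc n) x *v u = D (x (int n)) *v (iterate D n x *v u)"
    by (simp add: matrix_vector_mul_assoc)
  then show ?case by (simp add: Suc matrix_vector_mult_scaleR assms mult.commute)
qed simp

lemma abs_ln_diff_le:
  assumes "1 \<le> a" "1 \<le> (b::real)"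
  shows "\<bar>ln a - ln b\<bar> \<le> \<bar>a - b\<bar>"
proof -
  have "ln a - ln b \<le> a - b" if "1 \<le> b" "b \<le> a" for a b :: real
  proof -
    have "ln a - ln b = ln (a / b)" using that by (simp add: ln_div)
    also have "\<dots> \<le> a / b - 1" using that by (intro ln_le_minus_one) auto
    also have "\<dots> = (a - b) / b" using that by (simp add: field_simps)
    also have "\<dots> \<le> a - b" using that by (simp add: divide_le_eq mult_le_cancel_left1)
    finally show ?thesis .
  qed
  from this[of b a] this[of a b] assms show ?thesis by (cases "b \<le> a") auto
qed

definition log_growth :: "('s \<Rightarrow> mat2) \<Rightarrow> nat \<Rightarrow> (int \<Rightarrow> 's) \<Rightarrow> real" where
  "log_growth B n x = ln (mnorm (iterate B n x)) / real n"

lemma Ln_eq_integral_log_growth: "Ln p B n = integral\<^sup>L (bernoulli p) (log_growth B n)"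
  by (simp add: Ln_def log_growth_def[abs_def])

lemma log_growth_bounds:
  assumes "\<forall>j. B j \<in> SL2" "\<And>j. mnorm (B j) \<le> C"
  shows "0 \<le> log_growth B n x" "log_growth B n x \<le> ln C"
proof -
  have "1 \<le> mnorm (iterate B n x)" by (rule mnorm_iterate_ge_1[OF assms(1)])
  then show "0 \<le> log_growth B n x" by (simp add: log_growth_def)
  have "1 \<le> mnorm (B undefined)" using assms(1) by (simp add: SL2_def mnorm_ge_1)
  then have "1 \<le> C" using assms(2) order_trans by blast
  have "ln (mnorm (iterate B n x)) \<le> ln (C^n)"
    using \<open>1 \<le> mnorm (iterate B n x)\<close> mnorm_iterate_le[of B C n x] assms(2) by simp
  also have "\<dots> = n * ln C" using \<open>1 \<le> C\<close> by (simp add: ln_realpow)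
  finally show "log_growth B n x \<le> ln C"
    using \<open>1 \<le> C\<close> by (cases "n = 0") (simp_all add: log_growth_def divide_le_eq mult.commute)
qed

lemma log_growth_diff_le:
  assumes "\<forall>j. B j \<in> SL2" "\<forall>j. D j \<in> SL2" "\<And>j. mnorm (B j) \<le> C" "\<And>j. mnorm (D j) \<le> C"
    "\<And>j. mnorm (B j - D j) \<le> \<eta>" "1 \<le> C" "0 < n"
  shows "\<bar>log_growth B n x - log_growth D n x\<bar> \<le> C^n * \<eta>"
proof -
  have "\<bar>ln (mnorm (iterate B n x)) - ln (mnorm (iterate D n x))\<bar>
      \<le> \<bar>mnorm (iterate B n x) - mnorm (iterate D n x)\<bar>"
    by (intro abs_ln_diff_le mnorm_iterate_ge_1 assms)
  also have "\<dots> \<le> mnorm (iterate B n x - iterate D n x)"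
    using mnorm_le_add_diff[of "iterate B n x" "iterate D n x"]
      mnorm_le_add_diff[of "iterate D n x" "iterate B n x"]
      mnorm_minus_commute[of "iterate B n x" "iterate D n x"] by linarith
  also have "\<dots> \<le> n * (C^n * \<eta>)"
    using mnorm_iterate_diff_le[of B C D \<eta> n x] assms by (simp add: mult.assoc)
  finally show ?thesis
    using assms(7)
      by (simp add: log_growth_def diff_divide_distrib[symmetric] divide_le_eq mult.commute)
qed

section \<open>The Bernoulli measure\<close>

lemma prob_space_bernoulli: "prob_space (bernoulli p)"
  unfolding bernoulli_def by (rule prob_space_PiM) (simp add: prob_space_measure_pmf)

lemma space_bernoulli [simp]: "space (bernoulli p) = UNIV"
  by (simp add: bernoulli_def space_PiM)

lemma measurable_bernoulli_coord [measurable]: "(\<lambda>x. x i) \<in> measurable (bernoulli p) (measure_pmf p)"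
  unfolding bernoulli_def by (rule measurable_component_singleton) simp

lemma distr_bernoulli_coord: "distr (bernoulli p) (measure_pmf p) (\<lambda>x. x i) = measure_pmf p"
  unfolding bernoulli_def by (rule distr_PiM_component) (auto simp: prob_space_measure_pmf)

lemma borel_measurable_bernoulli_coord:
  "(\<lambda>x. g (x i) :: real) \<in> borel_measurable (bernoulli p)"
  by (rule measurable_compose[OF measurable_bernoulli_coord]) simp

lemma borel_measurable_bernoulli_iterate:
  fixes B :: "'s::finite \<Rightarrow> mat2"
  shows "(\<lambda>x. h (iterate B n x) :: real) \<in> borel_measurable (bernoulli p)"
proof (induction n arbitrary: h)
  case (Suc n)
  have "{x. x (int n) = j} \<in> sets (bernoulli p)" for j
    using measurable_sets[OF measurable_bernoulli_coord, of "{j}" p "int n"]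
      by (simp add: vimage_def)
  then have "(\<lambda>x. \<Sum>j\<in>UNIV. if x (int n) = j then h (B j ** iterate B n x) else 0)
      \<in> borel_measurable (bernoulli p)"
    using Suc[of "\<lambda>M. h (B _ ** M)"] by (intro borel_measurable_sum measurable_If) auto
  then show ?case by (simp add: sum.delta')
qed simp

lemma integral_bernoulli_coord:
  "integral\<^sup>L (bernoulli p) (\<lambda>x. g (x i)) = measure_pmf.expectation p (g :: _ \<Rightarrow> real)"
  by (subst integral_distr[symmetric, OF measurable_bernoulli_coord])
    (simp_all add: distr_bernoulli_coord)

lemma indep_vars_bernoulli_coord:
  assumes "finite I" "I \<noteq> {}"
  shows "prob_space.indep_vars (bernoulli p) (\<lambda>_. borel) (\<lambda>i x. g (x i) :: real) I"
proof -
  interpret M: prob_space "bernoulli p" by (rule prob_space_bernoulli)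
  interpret PP: product_prob_space "\<lambda>_. measure_pmf p" UNIV
    by unfold_locales (simp add: prob_space_measure_pmf)
  have "distr (bernoulli p) (Pi\<^sub>M I (\<lambda>i. measure_pmf p)) (\<lambda>x. restrict x I) = Pi\<^sub>M I (\<lambda>i. measure_pmf p)"
    unfolding bernoulli_def by (rule PP.distr_PiM_restrict_finite) (use assms in auto)
  then have "M.indep_vars (\<lambda>_. measure_pmf p) (\<lambda>i x. x i) I"
    using assms measurable_bernoulli_coord
      by (subst M.indep_vars_iff_distr_eq_PiM) (simp_all add: distr_bernoulli_coord)
  then show ?thesis by (rule M.indep_vars_compose2) simp
qed

definition hoeffding_bound :: "real \<Rightarrow> nat \<Rightarrow> real \<Rightarrow> real" where
  "hoeffding_bound R n t = exp (- (n * t^2 / (2 * R^2)))"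

lemma hoeffding_bernoulli_average:
  assumes "\<And>j. \<bar>g j\<bar> \<le> R" "0 < R" "0 < n" "0 \<le> t"
  shows "measure (bernoulli p)
           {x \<in> space (bernoulli p). t \<le> \<bar>(\<Sum>k<n. g (x (int k))) / n - measure_pmf.expectation p g\<bar>}
         \<le> 2 * hoeffding_bound R n t"
proof -
  interpret prob_space "bernoulli p" by (rule prob_space_bernoulli)
  define I where "I = int ` {..<n}"
  have I: "finite I" "I \<noteq> {}" "card I = n" using assms(3) by (auto simp: I_def card_image)
  have "distr (bernoulli p) borel (\<lambda>x. g (x i))
      = distr (distr (bernoulli p) (measure_pmf p) (\<lambda>x. x i)) borel g" for i
    using measurable_bernoulli_coord by (subst distr_distr) (auto simp: comp_def)
  then have distr_eq: "distr (bernoulli p) borel (\<lambda>x. g (x i)) = distr (measure_pmf p) borel g" for i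
    by (simp add: distr_bernoulli_coord)
  interpret H: Hoeffding_ineq_iid "bernoulli p" I "\<lambda>i x. g (x i)" "\<lambda>x. g (x 0)" "-R" R
    "expectation (\<lambda>x. g (x 0))"
    using I assms(1)[unfolded abs_le_iff] borel_measurable_bernoulli_coord
      by unfold_locales (auto simp: indep_vars_bernoulli_coord distr_eq minus_le_iff intro!: AE_I2)
  have "(\<Sum>i\<in>I. g (x i)) = (\<Sum>k<n. g (x (int k)))" for x
    unfolding I_def by (simp add: sum.reindex)
  then show ?thesis
    using H.Hoeffding_ineq_abs_ge'[of t] assms I
    by (simp add: hoeffding_bound_def integral_bernoulli_coord power2_eq_square field_simps)
qed

lemma integral_abs_le_tail:
  assumes "prob_space M" "f \<in> borel_measurable M"
    and "\<And>x. x \<in> space M \<Longrightarrow> \<bar>f x\<bar> \<le> R" "0 \<le> t"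
  shows "integral\<^sup>L M (\<lambda>x. \<bar>f x\<bar>) \<le> t + R * measure M {x \<in> space M. t \<le> \<bar>f x\<bar>}"
proof -
  interpret prob_space M by (rule assms(1))
  define A where "A = {x \<in> space M. t \<le> \<bar>f x\<bar>}"
  have A: "A \<in> sets M" unfolding A_def using assms(2) by measurable
  then have int_A: "integrable M (\<lambda>x. t + R * indicator A x)"
    by (intro Bochner_Integration.integrable_add integrable_mult_right integrable_real_indicator)
      (simp_all add: less_top[symmetric])
  have "integral\<^sup>L M (\<lambda>x. \<bar>f x\<bar>) \<le> integral\<^sup>L M (\<lambda>x. t + R * indicator A x)"
  proof (rule integral_mono[OF _ int_A])
    show "integrable M (\<lambda>x. \<bar>f x\<bar>)"
      by (rule integrable_const_bound[where B=R]) (use assms in auto)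
    show "\<bar>f x\<bar> \<le> t + R * indicator A x" if "x \<in> space M" for x
      using assms(3)[OF that] that assms(4) by (auto simp: A_def indicator_def)
  qed
  also have "\<dots> = t + R * measure M A"
    using A int_A
      by (subst Bochner_Integration.integral_add) (simp_all add: prob_space less_top[symmetric])
  finally show ?thesis unfolding A_def .
qed

lemma borel_measurable_log_growth [measurable]:
  fixes B :: "'s::finite \<Rightarrow> mat2"
  shows "log_growth B n \<in> borel_measurable (bernoulli p)"
  unfolding log_growth_def[abs_def] by (rule borel_measurable_bernoulli_iterate)

lemma integrable_log_growth:
  fixes B :: "'s::finite \<Rightarrow> mat2"
  assumes "\<forall>j. B j \<in> SL2" "\<And>j. mnorm (B j) \<le> C"
  shows "integrable (bernoulli p) (log_growth B n)"
proof -
  interpret prob_space "bernoulli p" by (rule prob_space_bernoulli)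
  have "\<bar>log_growth B n x\<bar> \<le> ln C" for x
    using log_growth_bounds[OF assms, of n x] by simp
  then show ?thesis by (intro integrable_const_bound[where B="ln C"] AE_I2) auto
qed

lemma Ln_diff_le:
  fixes B D :: "'s::finite \<Rightarrow> mat2"
  assumes "\<forall>j. B j \<in> SL2" "\<forall>j. D j \<in> SL2" "\<And>j. mnorm (B j) \<le> C" "\<And>j. mnorm (D j) \<le> C"
    "\<And>j. mnorm (B j - D j) \<le> \<eta>" "1 \<le> C" "0 < n"
  shows "\<bar>Ln p B n - Ln p D n\<bar> \<le> C^n * \<eta>"
proof -
  interpret prob_space "bernoulli p" by (rule prob_space_bernoulli)
  have int: "integrable (bernoulli p) (log_growth B n)" "integrable (bernoulli p) (log_growth D n)"
    using integrable_log_growth assms by blast+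
  have "\<bar>Ln p B n - Ln p D n\<bar> = \<bar>expectation (\<lambda>x. log_growth B n x - log_growth D n x)\<bar>"
    using int by (simp add: Ln_eq_integral_log_growth)
  also have "\<dots> \<le> expectation (\<lambda>x. \<bar>log_growth B n x - log_growth D n x\<bar>)"
    by (rule integral_abs_bound)
  also have "\<dots> \<le> expectation (\<lambda>x. C^n * \<eta>)"
    using int log_growth_diff_le[OF assms] by (intro integral_mono) auto
  finally show ?thesis using prob_space by simp
qed

lemma scale_estimates_perturb:
  fixes B D :: "'s::finite \<Rightarrow> mat2"
  assumes cocycles: "\<forall>j. B j \<in> SL2" "\<forall>j. D j \<in> SL2" "\<And>j. mnorm (B j) \<le> C" "\<And>j. mnorm (D j) \<le> C" "1 \<le> C"
    and close: "\<And>j. mnorm (B j - D j) \<le> \<eta>" "C ^ (2 * n) * \<eta> \<le> min (\<Lambda> / 6) (X / 4)" and "0 < n"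
    and D_est: "\<Lambda> / 2 \<le> Ln p D n" "\<bar>Ln p D (2 * n) - Ln p D n\<bar> \<le> X"
      "measure (bernoulli p) {x \<in> space (bernoulli p). X / 2 < \<bar>log_growth D n x - Ln p D n\<bar>} \<le> P"
  shows "\<Lambda> / 3 \<le> Ln p B n" "\<bar>Ln p B (2 * n) - Ln p B n\<bar> \<le> 2 * X"
    "measure (bernoulli p) {x \<in> space (bernoulli p). X < \<bar>log_growth B n x - Ln p B n\<bar>} \<le> P"
proof -
  interpret prob_space "bernoulli p" by (rule prob_space_bernoulli)
  have "0 \<le> \<eta>" using close(1)[of undefined] mnorm_nonneg order_trans by blast
  then have "C ^ n * \<eta> \<le> C ^ (2 * n) * \<eta>"
    using cocycles(5) by (intro mult_right_mono power_increasing) auto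
  then have small: "C ^ n * \<eta> \<le> \<Lambda> / 6" "C ^ n * \<eta> \<le> X / 4" "C ^ (2 * n) * \<eta> \<le> X / 4"
    using close(2) by simp_all
  have "0 < 2 * n" using \<open>0 < n\<close> by simp
  have diff_n: "\<bar>Ln p B n - Ln p D n\<bar> \<le> C ^ n * \<eta>"
    by (rule Ln_diff_le[OF cocycles(1-4) close(1) cocycles(5) \<open>0 < n\<close>])
  have diff_2n: "\<bar>Ln p B (2 * n) - Ln p D (2 * n)\<bar> \<le> C ^ (2 * n) * \<eta>"
    by (rule Ln_diff_le[OF cocycles(1-4) close(1) cocycles(5) \<open>0 < 2 * n\<close>])
  show "\<Lambda> / 3 \<le> Ln p B n" using diff_n small(1) D_est(1) by linarith
  show "\<bar>Ln p B (2 * n) - Ln p B n\<bar> \<le> 2 * X"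
    using diff_n diff_2n small(2,3) D_est(2) by linarith
  have "X / 2 < \<bar>log_growth D n x - Ln p D n\<bar>" if "X < \<bar>log_growth B n x - Ln p B n\<bar>" for x
    using that diff_n small(2) log_growth_diff_le[OF cocycles(1-4) close(1) cocycles(5) \<open>0 < n\<close>, of x]
    by linarith
  moreover have "{x \<in> space (bernoulli p). X / 2 < \<bar>log_growth D n x - Ln p D n\<bar>} \<in> sets (bernoulli p)"
    by measurable
  ultimately have "measure (bernoulli p) {x \<in> space (bernoulli p). X < \<bar>log_growth B n x - Ln p B n\<bar>}
      \<le> measure (bernoulli p) {x \<in> space (bernoulli p). X / 2 < \<bar>log_growth D n x - Ln p D n\<bar>}"
    by (intro finite_measure_mono) auto
  with D_est(3)
  show "measure (bernoulli p) {x \<in> space (bernoulli p). X < \<bar>log_growth B n x - Ln p B n\<bar>} \<le> P"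
    by linarith
qed

section \<open>Cocycles with uniformly transversal invariant lines\<close>

lemma SL2_if_Diag: "D \<in> Diag \<Longrightarrow> D j \<in> SL2"
  by (simp add: Diag_def)

lemma Diag_unit_eigenbasis:
  assumes "D \<in> Diag"
  obtains u v a b where "norm u = 1" "norm v = 1" "det2 u v \<noteq> 0"
    "\<And>j. D j *v u = a j *\<^sub>R u" "\<And>j. D j *v v = b j *\<^sub>R v"
proof -
  obtain u v where u: "u \<noteq> 0" and v: "v \<noteq> 0" and indep: "\<not> (\<exists>c. v = c *\<^sub>R u)"
    and eig: "\<forall>j. (\<exists>a. D j *v u = a *\<^sub>R u) \<and> (\<exists>b. D j *v v = b *\<^sub>R v)"
    using assms unfolding Diag_def by blast
  then obtain a b where ab: "\<And>j. D j *v u = a j *\<^sub>R u" "\<And>j. D j *v v = b j *\<^sub>R v"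
    by metis
  have "det2 u v \<noteq> 0" by (rule det2_neq_0_if_not_parallel[OF u indep])
  then have "det2 (u /\<^sub>R norm u) (v /\<^sub>R norm v) \<noteq> 0"
    using u v by (simp add: det2_def)
  with u v ab show ?thesis
    by (intro that[of "u /\<^sub>R norm u" "v /\<^sub>R norm v" a b]) (simp_all add: matrix_vector_mult_scaleR)
qed

(* With R = ln C and K = ln (2 / sqrt \<theta>), the bound on L_n(D) - L(D) for the Hoeffding
   deviation t = n^(-1/5) / 8. *)
definition Ln_error :: "real \<Rightarrow> real \<Rightarrow> nat \<Rightarrow> real" where
  "Ln_error R K n =
     K / n + (real n powr (-1/5) / 8 + 4 * R * hoeffding_bound R n (real n powr (-1/5) / 8))"

lemma Ln_error_tendsto_0: "0 < R \<Longrightarrow> Ln_error R K \<longlonglongrightarrow> 0"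
  unfolding Ln_error_def[abs_def] hoeffding_bound_def by real_asymp

(* For unit vectors, det2 u v is the sine of the angle between them. *)
locale diag_cocycle =
  fixes D :: "'s::finite \<Rightarrow> mat2" and u v :: "real^2" and a b :: "'s \<Rightarrow> real" and C \<theta> :: real
  assumes SL2: "\<forall>j. D j \<in> SL2"
    and unit: "norm u = 1" "norm v = 1"
    and eigen: "\<And>j. D j *v u = a j *\<^sub>R u" "\<And>j. D j *v v = b j *\<^sub>R v"
    and bounded: "\<And>j. mnorm (D j) \<le> C" and C_gt_1: "1 < C"
    and angle: "0 < \<theta>" "\<theta> \<le> (det2 u v)^2"
begin

abbreviation "K \<equiv> ln (2 / sqrt \<theta>)"

definition log_eig_avg :: "nat \<Rightarrow> (int \<Rightarrow> 's) \<Rightarrow> real" where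
  "log_eig_avg n x = (\<Sum>k<n. ln \<bar>a (x (int k))\<bar>) / real n"

definition log_eig_mean :: "'s pmf \<Rightarrow> real" where
  "log_eig_mean p = measure_pmf.expectation p (\<lambda>j. ln \<bar>a j\<bar>)"

lemma det2_neq_0: "det2 u v \<noteq> 0"
  using angle by auto

lemma abs_eigenvalue_prod: "\<bar>a j\<bar> * \<bar>b j\<bar> = 1"
  using det_disc_eigenbasis(1)[OF eigen det2_neq_0] SL2 by (simp add: SL2_def abs_mult)

lemma abs_eigenvalues_pos: "0 < \<bar>a j\<bar>" "0 < \<bar>b j\<bar>"
  using abs_eigenvalue_prod[of j] by (auto simp: zero_less_mult_iff)

lemma abs_ln_eigenvalue_le: "\<bar>ln \<bar>a j\<bar>\<bar> \<le> ln C"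
proof -
  note abs_eigenvalues_pos[of j]
  moreover have "\<bar>a j\<bar> \<le> C" "\<bar>b j\<bar> \<le> C"
    using abs_eigenvalue_le_mnorm[OF eigen(1) unit(1)] abs_eigenvalue_le_mnorm[OF eigen(2) unit(2)]
      bounded order_trans by blast+
  ultimately have "ln \<bar>a j\<bar> \<le> ln C" "ln \<bar>b j\<bar> \<le> ln C" by simp_all
  moreover have "ln \<bar>a j\<bar> + ln \<bar>b j\<bar> = 0"
    using abs_eigenvalue_prod[of j] ln_mult[of "\<bar>a j\<bar>" "\<bar>b j\<bar>"] abs_eigenvalues_pos[of j]
    by simp
  ultimately show ?thesis by linarith
qed

lemma ln_mnorm_iterate_bounds:
  fixes n :: nat and x :: "int \<Rightarrow> 's"
  defines "S \<equiv> (\<Sum>k<n. ln \<bar>a (x (int k))\<bar>)"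
  shows "\<bar>S\<bar> \<le> ln (mnorm (iterate D n x))" "ln (mnorm (iterate D n x)) \<le> \<bar>S\<bar> + K"
proof -
  define \<alpha> \<beta> where "\<alpha> = (\<Prod>k<n. a (x (int k)))" and "\<beta> = (\<Prod>k<n. b (x (int k)))"
  have eig: "iterate D n x *v u = \<alpha> *\<^sub>R u" "iterate D n x *v v = \<beta> *\<^sub>R v"
    unfolding \<alpha>_def \<beta>_def by (intro iterate_eigenvector eigen)+
  have prod: "\<bar>\<alpha>\<bar> * \<bar>\<beta>\<bar> = 1"
    by (simp add: \<alpha>_def \<beta>_def abs_prod prod.distrib[symmetric] abs_eigenvalue_prod)
  have "0 < \<bar>\<alpha>\<bar>" using prod by (cases "\<alpha> = 0") auto
  moreover have "ln \<bar>\<alpha>\<bar> = S"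
    unfolding \<alpha>_def S_def abs_prod using abs_eigenvalues_pos by (subst ln_prod) auto
  ultimately have "\<bar>\<alpha>\<bar> = exp S" by (metis exp_ln)
  moreover have "\<bar>\<beta>\<bar> = exp (- S)"
    using prod calculation by (simp add: exp_minus field_simps)
  ultimately have max_eq: "max \<bar>\<alpha>\<bar> \<bar>\<beta>\<bar> = exp \<bar>S\<bar>" by (simp add: max_def abs_if)
  have "max \<bar>\<alpha>\<bar> \<bar>\<beta>\<bar> \<le> mnorm (iterate D n x)"
    using abs_eigenvalue_le_mnorm[OF eig(1) unit(1)] abs_eigenvalue_le_mnorm[OF eig(2) unit(2)]
      by simp
  then have lower: "exp \<bar>S\<bar> \<le> mnorm (iterate D n x)" by (simp only: max_eq)
  then show "\<bar>S\<bar> \<le> ln (mnorm (iterate D n x))"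
    by (metis exp_gt_zero ln_exp ln_le_cancel_iff order_less_le_trans)
  have "sqrt \<theta> \<le> \<bar>det2 u v\<bar>"
    using angle real_sqrt_le_mono[of \<theta> "(det2 u v)^2"] by simp
  then have "2 * exp \<bar>S\<bar> / \<bar>det2 u v\<bar> \<le> 2 * exp \<bar>S\<bar> / sqrt \<theta>"
    using angle det2_neq_0 by (intro divide_left_mono) auto
  then have "mnorm (iterate D n x) \<le> 2 * exp \<bar>S\<bar> / sqrt \<theta>"
    using mnorm_le_eigenbasis[OF eig unit det2_neq_0] unfolding max_eq by linarith
  then have "mnorm (iterate D n x) \<le> exp \<bar>S\<bar> * (2 / sqrt \<theta>)" by (simp add: mult.commute)
  then have "ln (mnorm (iterate D n x)) \<le> ln (exp \<bar>S\<bar> * (2 / sqrt \<theta>))"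
    using lower exp_gt_zero order_less_le_trans by (intro ln_mono) blast+
  also have "\<dots> = \<bar>S\<bar> + K" using angle by (simp add: ln_mult ln_div)
  finally show "ln (mnorm (iterate D n x)) \<le> \<bar>S\<bar> + K" .
qed

lemma log_growth_log_eig_avg_bounds:
  assumes "0 < n"
  shows "\<bar>log_eig_avg n x\<bar> \<le> log_growth D n x" "log_growth D n x \<le> \<bar>log_eig_avg n x\<bar> + K / n"
  using ln_mnorm_iterate_bounds[where n=n and x=x] assms
  by (auto simp: log_growth_def log_eig_avg_def divide_right_mono add_divide_distrib[symmetric])

lemma abs_log_eig_avg_le: "\<bar>log_eig_avg n x\<bar> \<le> ln C"
proof -
  have "\<bar>\<Sum>k<n. ln \<bar>a (x (int k))\<bar>\<bar> \<le> (\<Sum>k<n. \<bar>ln \<bar>a (x (int k))\<bar>\<bar>)"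
    by (rule sum_abs)
  also have "\<dots> \<le> (\<Sum>k<n. ln C)"
    by (intro sum_mono abs_ln_eigenvalue_le)
  finally have "\<bar>\<Sum>k<n. ln \<bar>a (x (int k))\<bar>\<bar> \<le> n * ln C" by simp
  then show ?thesis
    using C_gt_1 by (cases "n = 0") (auto simp: log_eig_avg_def divide_le_eq mult.commute)
qed

lemma abs_log_eig_mean_le: "\<bar>log_eig_mean p\<bar> \<le> ln C"
proof -
  have "\<bar>log_eig_mean p\<bar> \<le> measure_pmf.expectation p (\<lambda>j. \<bar>ln \<bar>a j\<bar>\<bar>)"
    unfolding log_eig_mean_def by (rule integral_abs_bound)
  also have "\<dots> \<le> measure_pmf.expectation p (\<lambda>j. ln C)"
    using abs_ln_eigenvalue_le
    by (intro integral_mono integrable_measure_pmf_finite) auto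
  finally show ?thesis by simp
qed

lemma borel_measurable_log_eig_avg [measurable]: "log_eig_avg n \<in> borel_measurable (bernoulli p)"
  unfolding log_eig_avg_def[abs_def]
  by (intro borel_measurable_divide borel_measurable_sum borel_measurable_bernoulli_coord)

lemma integrable_log_eig_avg: "integrable (bernoulli p) (log_eig_avg n)"
proof -
  interpret prob_space "bernoulli p" by (rule prob_space_bernoulli)
  show ?thesis using abs_log_eig_avg_le by (intro integrable_const_bound[where B="ln C"] AE_I2) auto
qed

lemma integral_log_eig_avg:
  assumes "0 < n"
  shows "integral\<^sup>L (bernoulli p) (log_eig_avg n) = log_eig_mean p"
proof -
  interpret prob_space "bernoulli p" by (rule prob_space_bernoulli)
  have "integrable (bernoulli p) (\<lambda>x. ln \<bar>a (x (int k))\<bar>)" for k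
    using abs_ln_eigenvalue_le borel_measurable_bernoulli_coord
    by (intro integrable_const_bound[where B="ln C"] AE_I2) auto
  then have "expectation (\<lambda>x. \<Sum>k<n. ln \<bar>a (x (int k))\<bar>) = n * log_eig_mean p"
    by (subst Bochner_Integration.integral_sum)
      (auto simp: integral_bernoulli_coord[where g="\<lambda>j. ln \<bar>a j\<bar>"] log_eig_mean_def)
  then show ?thesis using assms by (simp add: log_eig_avg_def[abs_def])
qed

lemma log_eig_avg_tail:
  assumes "0 < n" "0 \<le> t"
  shows "measure (bernoulli p) {x \<in> space (bernoulli p). t \<le> \<bar>log_eig_avg n x - log_eig_mean p\<bar>}
    \<le> 2 * hoeffding_bound (ln C) n t"
  unfolding log_eig_avg_def log_eig_mean_def
  using abs_ln_eigenvalue_le C_gt_1 assms by (intro hoeffding_bernoulli_average) auto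

lemma expectation_abs_log_eig_avg_dev:
  assumes "0 < n" "0 \<le> t"
  shows "integral\<^sup>L (bernoulli p) (\<lambda>x. \<bar>log_eig_avg n x - log_eig_mean p\<bar>)
    \<le> t + 4 * ln C * hoeffding_bound (ln C) n t"
proof -
  have "\<bar>log_eig_avg n x - log_eig_mean p\<bar> \<le> 2 * ln C" for x
    using abs_log_eig_avg_le[of n x] abs_log_eig_mean_le[of p] by linarith
  then have "integral\<^sup>L (bernoulli p) (\<lambda>x. \<bar>log_eig_avg n x - log_eig_mean p\<bar>)
      \<le> t + 2 * ln C *
        measure (bernoulli p) {x \<in> space (bernoulli p). t \<le> \<bar>log_eig_avg n x - log_eig_mean p\<bar>}"
    using assms(2) by (intro integral_abs_le_tail prob_space_bernoulli) auto
  also have "\<dots> \<le> t + 2 * ln C * (2 * hoeffding_bound (ln C) n t)"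
    using log_eig_avg_tail[OF assms] C_gt_1 by (intro add_left_mono mult_left_mono) auto
  finally show ?thesis by simp
qed

lemma Ln_lower:
  assumes "0 < n"
  shows "\<bar>log_eig_mean p\<bar> \<le> Ln p D n"
proof -
  interpret prob_space "bernoulli p" by (rule prob_space_bernoulli)
  have "\<bar>log_eig_mean p\<bar> \<le> expectation (\<lambda>x. \<bar>log_eig_avg n x\<bar>)"
    using integral_abs_bound[of "bernoulli p" "log_eig_avg n"] integral_log_eig_avg[OF assms]
      by simp
  also have "\<dots> \<le> expectation (log_growth D n)"
    using log_growth_log_eig_avg_bounds(1)[OF assms] integrable_log_eig_avg
      integrable_log_growth[OF SL2 bounded]
    by (intro integral_mono) auto
  finally show ?thesis by (simp add: Ln_eq_integral_log_growth)
qed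

lemma Ln_upper:
  assumes "0 < n" "0 \<le> t"
  shows "Ln p D n \<le> \<bar>log_eig_mean p\<bar> + K / n + (t + 4 * ln C * hoeffding_bound (ln C) n t)"
proof -
  interpret prob_space "bernoulli p" by (rule prob_space_bernoulli)
  have int_dev: "integrable (bernoulli p) (\<lambda>x. \<bar>log_eig_avg n x - log_eig_mean p\<bar>)"
    using integrable_log_eig_avg by auto
  have "Ln p D n \<le> expectation (\<lambda>x. (\<bar>log_eig_mean p\<bar> + K / n) + \<bar>log_eig_avg n x - log_eig_mean p\<bar>)"
    unfolding Ln_eq_integral_log_growth
  proof (rule integral_mono)
    show "log_growth D n x \<le> (\<bar>log_eig_mean p\<bar> + K / n) + \<bar>log_eig_avg n x - log_eig_mean p\<bar>" for x
      using log_growth_log_eig_avg_bounds(2)[OF assms(1), of x] by linarith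
  qed (use integrable_log_growth[OF SL2 bounded] int_dev in auto)
  also have "\<dots> = \<bar>log_eig_mean p\<bar> + K / n + expectation (\<lambda>x. \<bar>log_eig_avg n x - log_eig_mean p\<bar>)"
    using int_dev prob_space by simp
  also have "\<dots> \<le> \<bar>log_eig_mean p\<bar> + K / n + (t + 4 * ln C * hoeffding_bound (ln C) n t)"
    using expectation_abs_log_eig_avg_dev[OF assms] by simp
  finally show ?thesis .
qed

lemma log_growth_deviation:
  assumes "0 < n" "0 \<le> t" and \<tau>: "2 * t + 2 * K / n + 4 * ln C * hoeffding_bound (ln C) n t \<le> \<tau>"
  shows "measure (bernoulli p) {x \<in> space (bernoulli p). \<tau> < \<bar>log_growth D n x - Ln p D n\<bar>}
    \<le> 2 * hoeffding_bound (ln C) n t"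
proof -
  interpret prob_space "bernoulli p" by (rule prob_space_bernoulli)
  have "t \<le> \<bar>log_eig_avg n x - log_eig_mean p\<bar>" if "\<tau> < \<bar>log_growth D n x - Ln p D n\<bar>" for x
    using that \<tau> log_growth_log_eig_avg_bounds[OF assms(1), of x] Ln_lower[OF assms(1), of p]
      Ln_upper[OF assms(1,2), of p] by (auto simp: abs_le_iff abs_less_iff)
  moreover have "{x \<in> space (bernoulli p). t \<le> \<bar>log_eig_avg n x - log_eig_mean p\<bar>} \<in> sets (bernoulli p)"
    by measurable
  ultimately have "measure (bernoulli p) {x \<in> space (bernoulli p). \<tau> < \<bar>log_growth D n x - Ln p D n\<bar>}
      \<le> measure (bernoulli p) {x \<in> space (bernoulli p). t \<le> \<bar>log_eig_avg n x - log_eig_mean p\<bar>}"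
    by (intro finite_measure_mono) auto
  also have "\<dots> \<le> 2 * hoeffding_bound (ln C) n t" by (rule log_eig_avg_tail[OF assms(1,2)])
  finally show ?thesis .
qed


lemma Ln_le_Ln_error:
  assumes "0 < n"
  shows "Ln p D n \<le> \<bar>log_eig_mean p\<bar> + Ln_error (ln C) K n"
  using Ln_upper[OF assms, of "real n powr (-1/5) / 8" p] by (simp add: Ln_error_def add.assoc)

lemma Lyap_eq: "Lyap p D = \<bar>log_eig_mean p\<bar>"
proof -
  have "(\<lambda>n. Ln p D n) \<longlonglongrightarrow> \<bar>log_eig_mean p\<bar>"
  proof (rule tendsto_sandwich)
    show "\<forall>\<^sub>F n in sequentially. \<bar>log_eig_mean p\<bar> \<le> Ln p D n"
      using eventually_gt_at_top[of 0] by eventually_elim (rule Ln_lower)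
    show "\<forall>\<^sub>F n in sequentially. Ln p D n \<le> \<bar>log_eig_mean p\<bar> + Ln_error (ln C) K n"
      using eventually_gt_at_top[of 0] by eventually_elim (rule Ln_le_Ln_error)
    show "(\<lambda>n. \<bar>log_eig_mean p\<bar> + Ln_error (ln C) K n) \<longlonglongrightarrow> \<bar>log_eig_mean p\<bar>"
      using tendsto_add[OF tendsto_const Ln_error_tendsto_0] C_gt_1 by simp
  qed simp
  then show ?thesis by (simp add: Lyap_def limI)
qed

end

lemma eventually_Ln_error_le:
  "0 < R \<Longrightarrow> \<forall>\<^sub>F n in sequentially. Ln_error R K n \<le> real n powr (-1/5) / 2"
  unfolding Ln_error_def hoeffding_bound_def by real_asymp

lemma eventually_Ln_error_double_le:
  assumes "0 < R"
  shows "\<forall>\<^sub>F n in sequentially. Ln_error R K (2 * n) \<le> real n powr (-1/5) / 2"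
proof -
  have "\<forall>\<^sub>F n in sequentially. Ln_error R K (2 * n) \<le> real (2 * n) powr (-1/5) / 2"
    using eventually_Ln_error_le[OF assms] mult_nat_left_at_top[of 2]
    by (rule eventually_compose_filterlim[where f="\<lambda>n. 2 * n"]) simp
  then show ?thesis using eventually_gt_at_top[of "0::nat"]
  proof eventually_elim
    case (elim n)
    have "real (2 * n) powr (-1/5) \<le> real n powr (-1/5)"
      using elim(2) by (intro powr_mono2') auto
    with elim(1) show ?case by linarith
  qed
qed

lemma eventually_deviation_threshold:
  "0 < R \<Longrightarrow> \<forall>\<^sub>F n in sequentially.
     2 * (real n powr (-1/5) / 8) + 2 * K / n + 4 * R * hoeffding_bound R n (real n powr (-1/5) / 8)
       \<le> real n powr (-1/5) / 2"
  unfolding hoeffding_bound_def by real_asymp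

lemma eventually_hoeffding_bound_le:
  "0 < R \<Longrightarrow> \<forall>\<^sub>F n in sequentially.
     2 * hoeffding_bound R n (real n powr (-1/5) / 8) \<le> exp (- (real n powr (1/3)))"
  unfolding hoeffding_bound_def by real_asymp

lemma eventually_diag_cocycle_scale_estimates:
  fixes p :: "'s::finite pmf"
  assumes "1 < C"
  shows "\<forall>\<^sub>F n in sequentially. \<forall>D u v a b. diag_cocycle D u v a b C \<theta> \<longrightarrow>
    \<bar>Ln p D (2 * n) - Ln p D n\<bar> \<le> real n powr (-1/5) \<and>
    measure (bernoulli p)
      {x \<in> space (bernoulli p). real n powr (-1/5) / 2 < \<bar>log_growth D n x - Ln p D n\<bar>}
      \<le> exp (- (real n powr (1/3)))"
proof -
  define K where "K = ln (2 / sqrt \<theta>)"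
  have R: "0 < ln C" using assms by simp
  show ?thesis
    using eventually_Ln_error_le[OF R, of K] eventually_Ln_error_double_le[OF R, of K]
      eventually_deviation_threshold[OF R, of K] eventually_hoeffding_bound_le[OF R]
      eventually_gt_at_top[of 0]
  proof eventually_elim
    case (elim n)
    show ?case
    proof (intro allI impI conjI)
      fix D :: "'s \<Rightarrow> mat2" and u v a b assume "diag_cocycle D u v a b C \<theta>"
      then interpret diag_cocycle D u v a b C \<theta> .
      have "0 < 2 * n" using elim(5) by simp
      show "\<bar>Ln p D (2 * n) - Ln p D n\<bar> \<le> real n powr (-1/5)"
        using Ln_lower[OF elim(5), of p] Ln_le_Ln_error[OF elim(5), of p]
          Ln_lower[OF \<open>0 < 2 * n\<close>, of p] Ln_le_Ln_error[OF \<open>0 < 2 * n\<close>, of p] elim(1,2)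
        unfolding K_def by (simp add: abs_le_iff) linarith
      show "measure (bernoulli p)
          {x \<in> space (bernoulli p). real n powr (-1/5) / 2 < \<bar>log_growth D n x - Ln p D n\<bar>}
          \<le> exp (- (real n powr (1/3)))"
        using log_growth_deviation[OF elim(5) _ elim(3)[unfolded K_def], of p] elim(4) by simp
    qed
  qed
qed

lemma Lyap_ge_half_near:
  fixes p :: "'s::finite pmf"
  assumes A: "diag_cocycle A uA vA aA bA C \<theta>" and pos: "0 < Lyap p A"
  shows "\<exists>\<delta>>0. \<forall>D u v a b. diag_cocycle D u v a b C \<theta> \<and> (\<forall>j. mnorm (D j - A j) \<le> \<delta>)
           \<longrightarrow> Lyap p A / 2 \<le> Lyap p D"
proof -
  interpret A: diag_cocycle A uA vA aA bA C \<theta> by (rule A)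
  have "0 < ln C" using A.C_gt_1 by simp
  from order_tendstoD(2)[OF Ln_error_tendsto_0[OF this], of "Lyap p A / 4" A.K] pos
  obtain N where N: "\<And>n. N \<le> n \<Longrightarrow> Ln_error (ln C) A.K n < Lyap p A / 4"
    unfolding eventually_sequentially by auto
  define n0 where "n0 = Suc N"
  have n0: "0 < n0" "Ln_error (ln C) A.K n0 < Lyap p A / 4" using N[of n0] by (simp_all add: n0_def)
  define \<delta> where "\<delta> = Lyap p A / (4 * C ^ n0)"
  have "0 < C ^ n0" using A.C_gt_1 by simp
  then have \<delta>: "0 < \<delta>" "C ^ n0 * \<delta> = Lyap p A / 4"
    using pos by (simp_all add: \<delta>_def del: power_eq_0_iff)
  show ?thesis
  proof (intro exI[of _ \<delta>] conjI allI impI \<delta>(1))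
    fix D :: "'s \<Rightarrow> mat2" and u v a b
    assume D: "diag_cocycle D u v a b C \<theta> \<and> (\<forall>j. mnorm (D j - A j) \<le> \<delta>)"
    then interpret D: diag_cocycle D u v a b C \<theta> by blast
    have "\<bar>Ln p D n0 - Ln p A n0\<bar> \<le> C ^ n0 * \<delta>"
      using D A.C_gt_1 by (intro Ln_diff_le D.SL2 A.SL2 D.bounded A.bounded n0(1)) auto
    moreover have "Ln p D n0 \<le> Lyap p D + Ln_error (ln C) A.K n0" "Lyap p A \<le> Ln p A n0"
      using D.Ln_le_Ln_error[OF n0(1), of p] A.Ln_lower[OF n0(1), of p]
      unfolding D.Lyap_eq A.Lyap_eq by simp_all
    ultimately show "Lyap p A / 2 \<le> Lyap p D"
      using n0(2) \<delta>(2) by linarith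
  qed
qed

section \<open>Cocycles close to a diagonal one\<close>

lemma diag_cocycle_near_nondegenerate:
  assumes A: "A \<in> Diag" and disc_pos: "0 < disc (A j0)" and C: "\<And>j. mnorm (A j) + 1 \<le> C"
  shows "\<exists>\<theta>>0. \<exists>\<eta>>0. \<forall>D\<in>Diag. (\<forall>j. mnorm (D j - A j) \<le> \<eta>) \<longrightarrow> (\<exists>u v a b. diag_cocycle D u v a b C \<theta>)"
proof -
  define \<Delta> where "\<Delta> = disc (A j0)"
  define \<eta> where "\<eta> = min 1 (\<Delta> / (2 * (16 * C + 8)))"
  have "1 \<le> mnorm (A j0)" using mnorm_ge_1 SL2_if_Diag[OF A] by (simp add: SL2_def)
  then have "2 \<le> C" using C[of j0] by simp
  then have \<eta>: "0 < \<eta>" "\<eta> \<le> 1" using disc_pos by (simp_all add: \<eta>_def \<Delta>_def)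
  have "\<eta> * (16 * C + 8) \<le> \<Delta> / (2 * (16 * C + 8)) * (16 * C + 8)"
    using \<open>2 \<le> C\<close> by (intro mult_right_mono) (simp_all add: \<eta>_def)
  also have "\<dots> = \<Delta> / 2" using \<open>2 \<le> C\<close> by (simp add: field_simps)
  finally have \<eta>_small: "\<eta> * (16 * C + 8) \<le> \<Delta> / 2" .
  have cocycle: "diag_cocycle D u v a b C (\<Delta> / (16 * C^2))"
    if D: "D \<in> Diag" and DA: "\<forall>j. mnorm (D j - A j) \<le> \<eta>" and eig: "norm u = 1" "norm v = 1"
      "\<And>j. D j *v u = a j *\<^sub>R u" "\<And>j. D j *v v = b j *\<^sub>R v" and "det2 u v \<noteq> 0" for D u v a b
  proof
    show "mnorm (D j) \<le> C" for j
      using mnorm_le_add_diff[of "D j" "A j"] DA[rule_format, of j] C[of j] \<eta>(2) by linarith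
    have "\<bar>D j0 $ i $ k - A j0 $ i $ k\<bar> \<le> \<eta>" for i k
      using abs_nth_le_mnorm[of "D j0 - A j0" i k] DA[rule_format, of j0] by simp
    moreover have "\<bar>A j0 $ i $ k\<bar> \<le> C" for i k
      using abs_nth_le_mnorm[of "A j0" i k] C[of j0] by simp
    ultimately have "\<bar>disc (D j0) - disc (A j0)\<bar> \<le> \<eta> * (16 * C + 8)"
      using \<eta>(2) by (rule abs_disc_diff_le)
    then have "\<Delta> / 2 \<le> (a j0 - b j0)^2"
      using \<eta>_small det_disc_eigenbasis(2)[OF eig(3,4) \<open>det2 u v \<noteq> 0\<close>]
        by (simp add: \<Delta>_def abs_le_iff)
    also have "\<dots> \<le> 8 * (mnorm (D j0))^2 * (det2 u v)^2"
      by (rule eigenvalue_gap_le[OF eig(3,4,1,2)])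
    also have "\<dots> \<le> 8 * C^2 * (det2 u v)^2"
      using \<open>mnorm (D j0) \<le> C\<close> mnorm_nonneg
        by (intro mult_right_mono mult_left_mono power_mono) auto
    finally show "\<Delta> / (16 * C^2) \<le> (det2 u v)^2"
      using \<open>2 \<le> C\<close> by (simp add: field_simps)
  qed (use D disc_pos \<open>2 \<le> C\<close> eig in \<open>auto simp: \<Delta>_def Diag_def\<close>)
  show ?thesis
  proof (rule exI[of _ "\<Delta> / (16 * C^2)"], intro conjI exI[of _ \<eta>] ballI impI)
    fix D assume "D \<in> Diag" "\<forall>j. mnorm (D j - A j) \<le> \<eta>"
    moreover obtain u v a b where "norm u = 1" "norm v = 1" "det2 u v \<noteq> 0"
      "\<And>j. D j *v u = a j *\<^sub>R u" "\<And>j. D j *v v = b j *\<^sub>R v"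
      using Diag_unit_eigenbasis[OF \<open>D \<in> Diag\<close>] by blast
    ultimately show "\<exists>u v a b. diag_cocycle D u v a b C (\<Delta> / (16 * C^2))"
      using cocycle by blast
  qed (use disc_pos \<eta>(1) \<open>2 \<le> C\<close> in \<open>simp_all add: \<Delta>_def\<close>)
qed

lemma Lyap_Diag_eq_0:
  assumes A: "A \<in> Diag" and disc: "\<And>j. disc (A j) \<le> 0"
  shows "Lyap p A = 0"
proof -
  obtain u v a b where unit: "norm u = 1" "norm v = 1" and "det2 u v \<noteq> 0"
    and eig: "\<And>j. A j *v u = a j *\<^sub>R u" "\<And>j. A j *v v = b j *\<^sub>R v"
    using Diag_unit_eigenbasis[OF A] by blast
  have ab: "b j = a j" for j
    using disc[of j] det_disc_eigenbasis(2)[OF eig \<open>det2 u v \<noteq> 0\<close>, of j] by simp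
  have "\<bar>a j\<bar> = 1" for j
  proof -
    have "\<bar>a j * a j\<bar> = 1"
      using det_disc_eigenbasis(1)[OF eig \<open>det2 u v \<noteq> 0\<close>, of j] SL2_if_Diag[OF A, of j]
      by (simp add: SL2_def ab)
    then have "a j = 1 \<or> a j = -1" by (simp add: abs_mult_self_eq square_eq_1_iff)
    then show ?thesis by auto
  qed
  have "mnorm (iterate A n x) = 1" for n x
  proof (rule antisym)
    define \<alpha> where "\<alpha> = (\<Prod>k<n. a (x (int k)))"
    have "iterate A n x *v u = \<alpha> *\<^sub>R u" "iterate A n x *v v = \<alpha> *\<^sub>R v"
      unfolding \<alpha>_def using eig by (simp_all add: iterate_eigenvector ab)
    then have "iterate A n x *v w = \<alpha> *\<^sub>R w" for w
      by (subst (1 2) vec2_decomposition[OF \<open>det2 u v \<noteq> 0\<close>, of w])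
        (simp add: matrix_vector_right_distrib matrix_vector_mult_scaleR algebra_simps)
    moreover have "\<bar>\<alpha>\<bar> = 1" by (simp add: \<alpha>_def abs_prod \<open>\<And>j. \<bar>a j\<bar> = 1\<close>)
    ultimately show "mnorm (iterate A n x) \<le> 1" by (intro mnorm_le) simp
    show "1 \<le> mnorm (iterate A n x)"
      using SL2_if_Diag[OF A] by (intro mnorm_iterate_ge_1) blast
  qed
  then show ?thesis by (simp add: Lyap_def Ln_def limI)
qed

lemma mnorm_le_cocycle_dist: "mnorm (B j - D j) \<le> cocycle_dist B D"
  by (simp add: cocycle_dist_def)

lemma cocycle_dist_nonneg: "0 \<le> cocycle_dist B D"
  using mnorm_le_cocycle_dist mnorm_nonneg order_trans by blast

lemma const_mat_1_in_Diag: "(\<lambda>_. mat 1) \<in> Diag"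
proof -
  have "\<not> (\<exists>c. axis 2 1 = c *\<^sub>R (axis 1 1 :: real^2))"
    by (auto simp: vec2_eq_iff axis_def)
  then show ?thesis
    unfolding Diag_def SL2_def
    by (intro CollectI conjI allI exI[of _ "axis 1 1"] exI[of _ "axis 2 1"])
      (auto intro: exI[of _ 1])
qed

lemma dist_Diag_le: "D \<in> Diag \<Longrightarrow> dist_Diag B \<le> cocycle_dist B D"
  unfolding dist_Diag_def by (rule cInf_lower) (auto intro: bdd_belowI[of _ 0] cocycle_dist_nonneg)

lemma dist_Diag_nonneg: "0 \<le> dist_Diag B"
  unfolding dist_Diag_def using const_mat_1_in_Diag
  by (intro cInf_greatest) (auto simp: cocycle_dist_nonneg)

lemma ex_Diag_cocycle_dist_less:
  assumes "dist_Diag B < \<eta>"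
  obtains D where "D \<in> Diag" "cocycle_dist B D < \<eta>"
  using cInf_lessD[of "(\<lambda>D. cocycle_dist B D) ` Diag" \<eta>] assms const_mat_1_in_Diag
  unfolding dist_Diag_def by blast

lemma eventually_log_scale_small:
  fixes R \<epsilon> :: real
  assumes "0 < R" "0 < \<epsilon>"
  shows "\<forall>\<^sub>F n in sequentially. \<forall>L>0. real n \<le> L powr (3/4) \<longrightarrow>
            2 * exp (2 * R * L powr (3/4) - L) \<le> min \<epsilon> (real n powr (-1/5) / 4)"
proof -
  have "\<forall>\<^sub>F L in at_top. 2 * exp (2 * R * L powr (3/4) - L) \<le> \<epsilon> \<and>
                         2 * exp (2 * R * L powr (3/4) - L) \<le> L powr (-3/20) / 4"
    using assms by (intro eventually_conj; real_asymp)
  then obtain L0 where L0: "\<And>L. L0 \<le> L \<Longrightarrow> 2 * exp (2 * R * L powr (3/4) - L) \<le> \<epsilon> \<and>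
      2 * exp (2 * R * L powr (3/4) - L) \<le> L powr (-3/20) / 4"
    unfolding eventually_at_top_linorder by blast
  show ?thesis
    unfolding eventually_sequentially
  proof (intro exI[of _ "nat \<lceil>max 1 L0\<rceil>"] allI impI)
    fix n and L :: real assume n: "nat \<lceil>max 1 L0\<rceil> \<le> n" and "0 < L" and nL: "real n \<le> L powr (3/4)"
    then have "1 \<le> real n" "L0 \<le> real n" by linarith+
    then have "1 \<le> L"
      using nL \<open>0 < L\<close> powr_less_mono2[of "3/4" L 1] by (cases "L < 1") auto
    then have "L powr (3/4) \<le> L"
      using powr_mono[of "3/4" 1 L] by simp
    then have "L0 \<le> L" using \<open>L0 \<le> real n\<close> nL by linarith
    moreover have "L powr (-3/20) \<le> real n powr (-1/5)"
    proof -
      have "(L powr (3/4)) powr (-1/5) \<le> real n powr (-1/5)"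
        using nL \<open>1 \<le> real n\<close> by (intro powr_mono2') auto
      then show ?thesis by (simp add: powr_powr)
    qed
    ultimately show "2 * exp (2 * R * L powr (3/4) - L) \<le> min \<epsilon> (real n powr (-1/5) / 4)"
      using L0[of L] by auto
  qed
qed

lemma exists_Diag_near_at_scale:
  fixes B :: "'s::finite \<Rightarrow> mat2"
  assumes "A \<in> Diag" "cocycle_dist B A \<le> \<delta>" "0 < \<delta>" "\<delta> < 1" "0 < \<epsilon>" "1 \<le> C"
    and scale: "dist_Diag B = 0 \<or> real n \<le> ln (1 / dist_Diag B) powr (3/4)"
    and window: "\<forall>L>0. real n \<le> L powr (3/4) \<longrightarrow> 2 * exp (2 * ln C * L powr (3/4) - L) \<le> \<epsilon>"
  obtains D where "D \<in> Diag" "cocycle_dist B D \<le> 2 * \<delta>" "C ^ (2 * n) * cocycle_dist B D \<le> \<epsilon>"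
proof (cases "dist_Diag B = 0")
  case True
  have "0 < C ^ (2 * n)" using \<open>1 \<le> C\<close> by simp
  define \<eta> where "\<eta> = min \<delta> (\<epsilon> / C ^ (2 * n))"
  have "0 < \<eta>" using \<open>0 < \<delta>\<close> \<open>0 < \<epsilon>\<close> \<open>0 < C ^ (2 * n)\<close> by (simp add: \<eta>_def)
  with True obtain D where D: "D \<in> Diag" "cocycle_dist B D < \<eta>"
    using ex_Diag_cocycle_dist_less by metis
  have "cocycle_dist B D \<le> \<epsilon> / C ^ (2 * n)" using D(2) by (simp add: \<eta>_def)
  then have "C ^ (2 * n) * cocycle_dist B D \<le> \<epsilon>"
    using \<open>0 < C ^ (2 * n)\<close> by (simp add: le_divide_eq mult.commute)
  moreover have "cocycle_dist B D \<le> 2 * \<delta>" using D(2) \<open>0 < \<delta>\<close> by (simp add: \<eta>_def)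
  ultimately show ?thesis using D(1) that by blast
next
  case False
  define d where "d = dist_Diag B"
  have "0 < d" "d < 1"
    using False dist_Diag_nonneg[of B] dist_Diag_le[OF assms(1), of B] assms(2,4)
      by (auto simp: d_def)
  obtain D where D: "D \<in> Diag" "cocycle_dist B D < 2 * d"
    using ex_Diag_cocycle_dist_less[of B "2 * d"] \<open>0 < d\<close> by (auto simp: d_def)
  define L where "L = ln (1 / d)"
  have "0 < L" "d = exp (- L)" using \<open>0 < d\<close> \<open>d < 1\<close> by (simp_all add: L_def ln_div)
  have "real n \<le> L powr (3/4)" using scale False by (simp add: L_def d_def)
  have "C ^ (2 * n) = exp (ln C) ^ (2 * n)" using \<open>1 \<le> C\<close> by simp
  also have "\<dots> = exp (2 * ln C * real n)" by (simp add: exp_of_nat_mult[symmetric] algebra_simps)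
  also have "\<dots> \<le> exp (2 * ln C * L powr (3/4))"
    using \<open>real n \<le> L powr (3/4)\<close> \<open>1 \<le> C\<close> by (simp add: mult_left_mono)
  finally have "C ^ (2 * n) * cocycle_dist B D \<le> exp (2 * ln C * L powr (3/4)) * (2 * exp (- L))"
    using D(2) cocycle_dist_nonneg[of B D] \<open>d = exp (- L)\<close> by (intro mult_mono) auto
  also have "\<dots> = 2 * exp (2 * ln C * L powr (3/4) - L)" by (simp add: exp_diff exp_minus field_simps)
  also have "\<dots> \<le> \<epsilon>" using window \<open>0 < L\<close> \<open>real n \<le> L powr (3/4)\<close> by blast
  finally show ?thesis
    using D dist_Diag_le[OF assms(1), of B] assms(2) by (intro that[of D]) (auto simp: d_def)
qed

lemma Diag_uniform_neighbourhood:
  fixes p :: "'s::finite pmf"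
  assumes A: "A \<in> Diag" and pos: "0 < Lyap p A" and C: "\<And>j. mnorm (A j) + 1 \<le> C"
  shows "\<exists>\<delta>>0. \<delta> \<le> 1 \<and> (\<exists>\<theta>. \<forall>D\<in>Diag. (\<forall>j. mnorm (D j - A j) \<le> \<delta>) \<longrightarrow>
           (\<exists>u v a b. diag_cocycle D u v a b C \<theta> \<and> Lyap p A / 2 \<le> Lyap p D))"
proof -
  have "\<exists>j0. 0 < disc (A j0)"
  proof (rule ccontr)
    assume "\<nexists>j0. 0 < disc (A j0)"
    then have "Lyap p A = 0" by (intro Lyap_Diag_eq_0[OF A]) (simp add: not_less)
    with pos show False by simp
  qed
  then obtain \<theta> \<eta> where "0 < \<eta>"
    and near: "\<forall>D\<in>Diag. (\<forall>j. mnorm (D j - A j) \<le> \<eta>) \<longrightarrow> (\<exists>u v a b. diag_cocycle D u v a b C \<theta>)"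
    using diag_cocycle_near_nondegenerate[OF A _ C] by blast
  then obtain uA vA aA bA where "diag_cocycle A uA vA aA bA C \<theta>"
    using A by auto
  then obtain \<delta> where "0 < \<delta>" and half: "\<forall>D u v a b. diag_cocycle D u v a b C \<theta> \<and>
      (\<forall>j. mnorm (D j - A j) \<le> \<delta>) \<longrightarrow> Lyap p A / 2 \<le> Lyap p D"
    using Lyap_ge_half_near[OF _ pos] by blast
  show ?thesis
  proof (rule exI[of _ "min (min \<eta> \<delta>) 1"], intro conjI exI[of _ \<theta>] ballI impI)
    show "0 < min (min \<eta> \<delta>) 1" using \<open>0 < \<eta>\<close> \<open>0 < \<delta>\<close> by simp
    fix D assume "D \<in> Diag" and "\<forall>j. mnorm (D j - A j) \<le> min (min \<eta> \<delta>) 1"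
    then have "\<forall>j. mnorm (D j - A j) \<le> \<eta>" "\<forall>j. mnorm (D j - A j) \<le> \<delta>" by simp_all
    then show "\<exists>u v a b. diag_cocycle D u v a b C \<theta> \<and> Lyap p A / 2 \<le> Lyap p D"
      using near half \<open>D \<in> Diag\<close> by blast
  qed simp
qed

lemma eventually_estimates_near_Diag:
  fixes p :: "'s::finite pmf"
  assumes A: "A \<in> Diag" and C: "\<And>j. mnorm (A j) + 1 \<le> C" "1 < C"
    and "0 < \<Lambda>" "0 < \<delta>" "\<delta> \<le> 1"
    and nbhd: "\<forall>D\<in>Diag. (\<forall>j. mnorm (D j - A j) \<le> \<delta>) \<longrightarrow>
      (\<exists>u v a b. diag_cocycle D u v a b C \<theta> \<and> \<Lambda> / 2 \<le> Lyap p D)"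
  shows "\<forall>\<^sub>F n in sequentially. \<forall>B. (\<forall>j. B j \<in> SL2) \<and> cocycle_dist B A \<le> \<delta> / 3 \<and>
      (dist_Diag B = 0 \<or> real n \<le> ln (1 / dist_Diag B) powr (3/4)) \<longrightarrow>
    \<Lambda> / 3 \<le> Ln p B n \<and> \<bar>Ln p B (2 * n) - Ln p B n\<bar> \<le> 2 * real n powr (-1/5) \<and>
    measure (bernoulli p) {x \<in> space (bernoulli p). real n powr (-1/5) < \<bar>log_growth B n x - Ln p B n\<bar>}
      \<le> exp (- (real n powr (1/3)))"
proof -
  have pos: "0 < ln C" "0 < \<Lambda> / 6" using C(2) \<open>0 < \<Lambda>\<close> by simp_all
  show ?thesis
    using eventually_diag_cocycle_scale_estimates[OF C(2), of \<theta> p] eventually_log_scale_small[OF pos]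
      eventually_gt_at_top[of 0]
  proof eventually_elim
    case (elim n)
    show ?case
    proof (intro allI impI)
      fix B :: "'s \<Rightarrow> mat2"
      assume B: "(\<forall>j. B j \<in> SL2) \<and> cocycle_dist B A \<le> \<delta> / 3 \<and>
        (dist_Diag B = 0 \<or> real n \<le> ln (1 / dist_Diag B) powr (3/4))"
      have "0 < \<delta> / 3" "\<delta> / 3 < 1" "0 < min (\<Lambda> / 6) (real n powr (-1/5) / 4)" "1 \<le> C"
        using \<open>0 < \<delta>\<close> \<open>\<delta> \<le> 1\<close> \<open>0 < \<Lambda>\<close> elim(3) C(2) by simp_all
      then obtain D where D: "D \<in> Diag" "cocycle_dist B D \<le> 2 * (\<delta> / 3)"
        "C ^ (2 * n) * cocycle_dist B D \<le> min (\<Lambda> / 6) (real n powr (-1/5) / 4)"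
        using exists_Diag_near_at_scale[OF A _ _ _ _ _ _ elim(2), of B "\<delta> / 3"] B by blast
      have "mnorm (D j - A j) \<le> \<delta>" for j
        using mnorm_diff_triangle[of "D j" "A j" "B j"] mnorm_minus_commute[of "D j" "B j"]
          mnorm_le_cocycle_dist[of B j D] mnorm_le_cocycle_dist[of B j A] B D(2)
        by linarith
      then obtain u v a b where cocycle: "diag_cocycle D u v a b C \<theta>" and "\<Lambda> / 2 \<le> Lyap p D"
        using nbhd D(1) by blast
      interpret diag_cocycle D u v a b C \<theta> by (rule cocycle)
      have "mnorm (B j) \<le> C" for j
        using mnorm_le_add_diff[of "B j" "A j"] mnorm_le_cocycle_dist[of B j A] B C(1)[of j] \<open>\<delta> \<le> 1\<close>
        by linarith
      moreover have "\<Lambda> / 2 \<le> Ln p D n"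
        using \<open>\<Lambda> / 2 \<le> Lyap p D\<close> Ln_lower[OF elim(3), of p] by (simp add: Lyap_eq)
      moreover note D_est = elim(1)[rule_format, OF cocycle]
      ultimately show "\<Lambda> / 3 \<le> Ln p B n \<and> \<bar>Ln p B (2 * n) - Ln p B n\<bar> \<le> 2 * real n powr (-1/5) \<and>
        measure (bernoulli p) {x \<in> space (bernoulli p). real n powr (-1/5) < \<bar>log_growth B n x - Ln p B n\<bar>}
          \<le> exp (- (real n powr (1/3)))"
        using scale_estimates_perturb[OF conjunct1[OF B] SL2 _ bounded _ mnorm_le_cocycle_dist D(3)
            elim(3) _ conjunct1[OF D_est] conjunct2[OF D_est]] C(2)
        by simp
    qed
  qed
qed

theorem proposition6p1:
  fixes p :: "'s::finite pmf" and A :: "'s \<Rightarrow> mat2"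
  assumes p_pos: "set_pmf p = UNIV"
    and A_diag: "A \<in> Diag"
    and L_pos: "Lyap p A > 0"
  shows "\<exists>\<delta>>0. \<exists>nbar::nat. \<forall>B :: 's \<Rightarrow> mat2.
           (\<forall>j. B j \<in> SL2) \<and> cocycle_dist B A \<le> \<delta> \<longrightarrow>
           (\<forall>n::nat. nbar \<le> n \<and>
                (dist_Diag B = 0 \<or> real n \<le> (ln (1 / dist_Diag B)) powr (3/4)) \<longrightarrow>
              Ln p B n \<ge> Lyap p A / 3 \<and>
              \<bar>Ln p B (2*n) - Ln p B n\<bar> \<le> 2 * real n powr (-1/5) \<and>
              measure (bernoulli p)
                {x \<in> space (bernoulli p).
                   \<bar>ln (mnorm (iterate B n x)) / real n - Ln p B n\<bar> > real n powr (-1/5)}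
                \<le> exp (- (real n powr (1/3))))"
proof -
  (* Hoeffding's inequality needs no positivity of p. *)
  define C where "C = Max (range (\<lambda>j. mnorm (A j))) + 1"
  have C: "mnorm (A j) + 1 \<le> C" for j by (simp add: C_def)
  have "1 \<le> mnorm (A undefined)" using SL2_if_Diag[OF A_diag] mnorm_ge_1 by (simp add: SL2_def)
  with C[of undefined] have "1 < C" by linarith
  obtain \<delta> \<theta> where "0 < \<delta>" "\<delta> \<le> 1" and nbhd: "\<forall>D\<in>Diag. (\<forall>j. mnorm (D j - A j) \<le> \<delta>) \<longrightarrow>
       (\<exists>u v a b. diag_cocycle D u v a b C \<theta> \<and> Lyap p A / 2 \<le> Lyap p D)"
    using Diag_uniform_neighbourhood[OF A_diag L_pos C] by blast
  from eventually_estimates_near_Diag[OF A_diag C \<open>1 < C\<close> L_pos \<open>0 < \<delta>\<close> \<open>\<delta> \<le> 1\<close> nbhd]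
  show ?thesis
    unfolding eventually_sequentially log_growth_def using \<open>0 < \<delta>\<close>
    by (intro exI[of _ "\<delta> / 3"] conjI) auto
qed

end
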